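(* Let $p\in(0,\infty)$, $\omega^0\in\mathbb Z^V$, let $\gamma\subset V$ be a finite nonempty connected set, and let $\omega\in\mathbb Z^V$ satisfy $\omega_v\neq\omega^0_v$ for $v\in\gamma$ and $\omega_v=\omega^0_v$ for $v\notin\gamma$. Let $E_\gamma$ denote the set of edges of $\mathcal T^d$ having at least one endpoint in $\gamma$. Then $$H(\omega)-H(\omega^0):=\sum_{\{v,w\}\in E_\gamma}\Bigl(|\omega_v-\omega_w|^p-|\omega^0_v-\omega^0_w|^p\Bigr)\ \ge\ (dc_p^2-1)\sum_{v\in\gamma}|\omega_v-\omega^0_v|^p-(c_p+1)\sum_{\{v,w\}\in E_\gamma}|\omega^0_v-\omega^0_w|^p,$$ where $c_p=\min\{2^{1-p},1\}$.
   Context: $\mathcal T^d=(V,E)$ is the Cayley tree of order $d\ge2$ (every vertex has $d+1$ neighbours). The excess energy $H(\omega)-H(\omega^0)$ of the $p$-SOS model (edge energy $|\omega_v-\omega_w|^p$) for two configurations differing on finitely many sites is the (finite) sum over edges of the differences of edge energies, which equals the sum over $E_\gamma$ in the claim. *)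

theory Defs
  imports Complex_Main
begin

text \<open>Cayley tree of order d: the Cayley graph of the free product of d+1 copies of Z/2.
  Vertices are reduced words over the letters 0..d (no two consecutive equal letters);
  the empty word is the root; the neighbours of a word xs are a#xs (a \<noteq> hd xs) and tl xs.
  Every vertex has exactly d+1 neighbours.\<close>

definition cayley_V :: "nat \<Rightarrow> nat list set" where
  "cayley_V d = {xs. set xs \<subseteq> {..d} \<and> successively (\<noteq>) xs}"

definition tree_adj :: "nat \<Rightarrow> nat list \<Rightarrow> nat list \<Rightarrow> bool" where
  "tree_adj d v w \<longleftrightarrow> v \<in> cayley_V d \<and> w \<in> cayley_V d \<and> (\<exists>a. v = a # w \<or> w = a # v)"

text \<open>Each undirected edge {v,w} is represented exactly once by the oriented pair (child, parent),
  i.e. (a#w, w).\<close>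
definition tree_edges :: "nat \<Rightarrow> (nat list \<times> nat list) set" where
  "tree_edges d = {(v, w). tree_adj d v w \<and> v \<noteq> [] \<and> tl v = w}"

definition E_gamma :: "nat \<Rightarrow> nat list set \<Rightarrow> (nat list \<times> nat list) set" where
  "E_gamma d \<gamma> = {(v, w) \<in> tree_edges d. v \<in> \<gamma> \<or> w \<in> \<gamma>}"

definition tree_connected :: "nat \<Rightarrow> nat list set \<Rightarrow> bool" where
  "tree_connected d \<gamma> \<longleftrightarrow>
     (\<forall>u\<in>\<gamma>. \<forall>v\<in>\<gamma>. (\<lambda>x y. x \<in> \<gamma> \<and> y \<in> \<gamma> \<and> tree_adj d x y)\<^sup>*\<^sup>* u v)"

definition c_p :: "real \<Rightarrow> real" where
  "c_p p = min (2 powr (1 - p)) 1"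

end

theory Submission imports Defs "HOL-Analysis.Analysis" begin

text \<open>The map \<open>\<rho>(x, y) = \<bar>x - y\<bar>\<^sup>p\<close> is a quasi-metric: \<open>c\<^sub>p \<rho>(x, z) \<le> \<rho>(x, y) + \<rho>(y, z)\<close>.
  Applying this twice along \<open>\<omega>\<^sub>v, \<omega>\<^sub>w, \<omega>\<^sup>0\<^sub>w, \<omega>\<^sup>0\<^sub>v\<close> bounds the energy of an edge
  \<open>{v, w}\<close> from below by \<open>c\<^sub>p\<^sup>2 \<rho>(\<omega>\<^sub>v, \<omega>\<^sup>0\<^sub>v) - \<rho>(\<omega>\<^sub>w, \<omega>\<^sup>0\<^sub>w) - c\<^sub>p \<rho>(\<omega>\<^sup>0\<^sub>v, \<omega>\<^sup>0\<^sub>w)\<close>.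
  Orient every edge of \<open>E\<^sub>\<gamma>\<close> so that its inner end \<open>v\<close> is the parent whenever the parent lies
  in \<open>\<gamma>\<close>, and sum these bounds. Every vertex of \<open>\<gamma>\<close> is the inner end of its at least \<open>d\<close> child
  edges, while an outer end in \<open>\<gamma>\<close> is always a child, hence determines its edge; the outer
  ends outside \<open>\<gamma>\<close> carry no perturbation.\<close>

lemma powr_add_le_add_powr:
  fixes a b p :: real
  assumes "0 \<le> a" "0 \<le> b" "0 < p" "p \<le> 1"
  shows "(a + b) powr p \<le> a powr p + b powr p"
proof (cases "a + b = 0")
  case True
  then show ?thesis using assms by simp
next
  case False
  then have s: "a + b > 0" using assms by simp
  have le_powr: "x \<le> x powr p" if "0 \<le> x" "x \<le> 1" for x
    using powr_mono'[of p 1 x] that assms by simp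
  have "1 = a / (a + b) + b / (a + b)"
    using s by (simp flip: add_divide_distrib)
  also have "\<dots> \<le> (a / (a + b)) powr p + (b / (a + b)) powr p"
    using assms s by (intro add_mono le_powr) auto
  also have "\<dots> = (a powr p + b powr p) / (a + b) powr p"
    using assms by (simp add: powr_divide add_divide_distrib)
  finally show ?thesis
    using s by (simp add: field_simps)
qed

lemma powr_add_le_convex:
  fixes a b p :: real
  assumes "0 \<le> a" "0 \<le> b" "1 \<le> p"
  shows "(a + b) powr p \<le> 2 powr (p - 1) * (a powr p + b powr p)"
proof (cases "a = 0 \<or> b = 0")
  case True
  have "1 \<le> (2::real) powr (p - 1)"
    using assms by (simp add: ge_one_powr_ge_zero)
  then show ?thesis
    using True assms by (auto simp: mult_le_cancel_right1)
next
  case False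
  then have "((1 - 1/2) *\<^sub>R a + (1/2) *\<^sub>R b) powr p \<le> (1 - 1/2) * a powr p + (1/2) * b powr p"
    using convex_onD[OF powr_convex[OF assms(3)], of "1/2" a b] assms by simp
  then have "((a + b) / 2) powr p \<le> (a powr p + b powr p) / 2"
    by (simp add: field_simps)
  then have "2 powr p * ((a + b) / 2) powr p \<le> 2 powr p * ((a powr p + b powr p) / 2)"
    by (intro mult_left_mono) auto
  then show ?thesis
    using assms by (simp add: powr_divide powr_diff)
qed

lemma c_p_nonneg: "0 \<le> c_p p"
  by (simp add: c_p_def)

lemma c_p_abs_diff_powr_le:
  fixes x y z p :: real
  assumes "0 < p"
  shows "c_p p * \<bar>x - z\<bar> powr p \<le> \<bar>x - y\<bar> powr p + \<bar>y - z\<bar> powr p"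
proof -
  have tri: "\<bar>x - z\<bar> powr p \<le> (\<bar>x - y\<bar> + \<bar>y - z\<bar>) powr p"
    using assms by (intro powr_mono2) auto
  show ?thesis
  proof (cases "p \<le> 1")
    case True
    have "c_p p * \<bar>x - z\<bar> powr p \<le> \<bar>x - z\<bar> powr p"
      by (rule mult_left_le_one_le) (auto simp: c_p_def)
    also note tri
    also have "(\<bar>x - y\<bar> + \<bar>y - z\<bar>) powr p \<le> \<bar>x - y\<bar> powr p + \<bar>y - z\<bar> powr p"
      using powr_add_le_add_powr assms True by simp
    finally show ?thesis .
  next
    case False
    have c: "c_p p = 2 powr (1 - p)"
      using False powr_mono[of "1 - p" 0 "2::real"] by (simp add: c_p_def min_def)
    have "2 powr (1 - p) * \<bar>x - z\<bar> powr p
        \<le> 2 powr (1 - p) * (2 powr (p - 1) * (\<bar>x - y\<bar> powr p + \<bar>y - z\<bar> powr p))"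
      using tri powr_add_le_convex[of "\<bar>x - y\<bar>" "\<bar>y - z\<bar>" p] False
      by (intro mult_left_mono) auto
    also have "\<dots> = \<bar>x - y\<bar> powr p + \<bar>y - z\<bar> powr p"
      by (simp flip: mult.assoc powr_add)
    finally show ?thesis using c by simp
  qed
qed

lemma edge_energy_perturbation_bound:
  fixes x y x0 y0 p :: real
  assumes "0 < p"
  shows "c_p p ^ 2 * \<bar>x - x0\<bar> powr p - \<bar>y - y0\<bar> powr p - (c_p p + 1) * \<bar>x0 - y0\<bar> powr p
    \<le> \<bar>x - y\<bar> powr p - \<bar>x0 - y0\<bar> powr p"
proof -
  let ?c = "c_p p"
  have "?c ^ 2 * \<bar>x - x0\<bar> powr p \<le> ?c * (\<bar>x - y0\<bar> powr p + \<bar>y0 - x0\<bar> powr p)"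
    unfolding power2_eq_square mult.assoc
    using c_p_abs_diff_powr_le[OF assms] c_p_nonneg by (intro mult_left_mono) auto
  moreover have "?c * \<bar>x - y0\<bar> powr p \<le> \<bar>x - y\<bar> powr p + \<bar>y - y0\<bar> powr p"
    using c_p_abs_diff_powr_le[OF assms] .
  ultimately show ?thesis
    by (simp add: distrib_left abs_minus_commute[of y0 x0] algebra_simps)
qed

definition inner_end :: "'a set \<Rightarrow> 'a \<times> 'a \<Rightarrow> 'a" where
  "inner_end \<gamma> e = (if snd e \<in> \<gamma> then snd e else fst e)"

definition outer_end :: "'a set \<Rightarrow> 'a \<times> 'a \<Rightarrow> 'a" where
  "outer_end \<gamma> e = (if snd e \<in> \<gamma> then fst e else snd e)"

definition child_letters :: "nat \<Rightarrow> nat list \<Rightarrow> nat set" where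
  "child_letters d w = {a. a \<le> d \<and> (w = [] \<or> a \<noteq> hd w)}"

lemma card_child_letters_ge: "d \<le> card (child_letters d w)"
proof (cases w)
  case Nil
  then show ?thesis by (simp add: child_letters_def)
next
  case (Cons x xs)
  then have "child_letters d w = {..d} - {x}" by (auto simp: child_letters_def)
  then show ?thesis by (simp add: card_Diff_singleton_if)
qed

lemma child_edge_in_tree_edges:
  assumes "w \<in> cayley_V d" "a \<in> child_letters d w"
  shows "(a # w, w) \<in> tree_edges d"
  using assms by (cases w) (auto simp: child_letters_def cayley_V_def tree_edges_def tree_adj_def)

lemma finite_E_gamma:
  assumes "finite \<gamma>"
  shows "finite (E_gamma d \<gamma>)"
proof (rule finite_subset)
  show "E_gamma d \<gamma> \<subseteq> (\<lambda>v. (v, tl v)) ` \<gamma> \<union> (\<lambda>(w, a). (a # w, w)) ` (\<gamma> \<times> {..d})"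
  proof
    fix e assume "e \<in> E_gamma d \<gamma>"
    then obtain a w where "e = (a # w, w)" "a \<le> d" "a # w \<in> \<gamma> \<or> w \<in> \<gamma>"
      by (auto simp: E_gamma_def tree_edges_def tree_adj_def cayley_V_def neq_Nil_conv)
    then show "e \<in> (\<lambda>v. (v, tl v)) ` \<gamma> \<union> (\<lambda>(w, a). (a # w, w)) ` (\<gamma> \<times> {..d})"
      by force
  qed
qed (use assms in auto)

lemma sum_outer_end_le:
  fixes D :: "nat list \<Rightarrow> real"
  assumes "finite \<gamma>" and nonneg: "\<And>v. 0 \<le> D v"
    and outside: "\<And>v. v \<in> cayley_V d \<Longrightarrow> v \<notin> \<gamma> \<Longrightarrow> D v = 0"
  shows "(\<Sum>e\<in>E_gamma d \<gamma>. D (outer_end \<gamma> e)) \<le> (\<Sum>v\<in>\<gamma>. D v)"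
proof -
  let ?E = "E_gamma d \<gamma>"
  let ?E' = "{e \<in> ?E. outer_end \<gamma> e \<in> \<gamma>}"
  have "outer_end \<gamma> e \<in> cayley_V d" if "e \<in> ?E" for e
    using that by (auto simp: E_gamma_def tree_edges_def tree_adj_def outer_end_def)
  then have "(\<Sum>e\<in>?E. D (outer_end \<gamma> e)) = (\<Sum>e\<in>?E'. D (outer_end \<gamma> e))"
    using finite_E_gamma[OF assms(1)] outside by (intro sum.mono_neutral_right) auto
  also have "\<dots> = (\<Sum>v\<in>outer_end \<gamma> ` ?E'. D v)"
  proof -
    \<comment> \<open>an outer end in \<open>\<gamma>\<close> is the child of its edge, and the child determines the edge\<close>
    have "inj_on (outer_end \<gamma>) ?E'"
    proof (rule inj_onI)
      fix e e' assume "e \<in> ?E'" "e' \<in> ?E'" "outer_end \<gamma> e = outer_end \<gamma> e'"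
      then show "e = e'"
        by (cases e; cases e') (auto simp: E_gamma_def tree_edges_def outer_end_def split: if_splits)
    qed
    then show ?thesis by (simp add: sum.reindex)
  qed
  also have "\<dots> \<le> (\<Sum>v\<in>\<gamma>. D v)"
    by (rule sum_mono2[OF assms(1)]) (auto simp: nonneg)
  finally show ?thesis .
qed

lemma sum_inner_end_ge:
  fixes D :: "nat list \<Rightarrow> real"
  assumes "finite \<gamma>" "\<gamma> \<subseteq> cayley_V d" and nonneg: "\<And>v. 0 \<le> D v"
  shows "real d * (\<Sum>v\<in>\<gamma>. D v) \<le> (\<Sum>e\<in>E_gamma d \<gamma>. D (inner_end \<gamma> e))"
proof -
  let ?S = "Sigma \<gamma> (child_letters d)"
  let ?child_edge = "\<lambda>(w, a). (a # w, w)"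
  have edges: "?child_edge ` ?S \<subseteq> E_gamma d \<gamma>"
    using assms(2) child_edge_in_tree_edges by (fastforce simp: E_gamma_def)
  have "real d * (\<Sum>v\<in>\<gamma>. D v) \<le> (\<Sum>w\<in>\<gamma>. real (card (child_letters d w)) * D w)"
    unfolding sum_distrib_left
    by (intro sum_mono mult_right_mono) (auto simp: card_child_letters_ge nonneg)
  also have "\<dots> = (\<Sum>(w, a)\<in>?S. D w)"
    using assms(1) by (simp add: sum.Sigma[symmetric] child_letters_def)
  also have "\<dots> = (\<Sum>e\<in>?child_edge ` ?S. D (inner_end \<gamma> e))"
    by (subst sum.reindex) (auto simp: inj_on_def inner_end_def intro!: sum.cong)
  also have "\<dots> \<le> (\<Sum>e\<in>E_gamma d \<gamma>. D (inner_end \<gamma> e))"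
    by (rule sum_mono2[OF finite_E_gamma[OF assms(1)] edges]) (simp add: nonneg)
  finally show ?thesis .
qed

theorem lemma1:
  fixes d :: nat and p :: real and \<omega>0 \<omega> :: "nat list \<Rightarrow> int" and \<gamma> :: "nat list set"
  assumes "d \<ge> 2" and "p > 0"
    and "\<gamma> \<subseteq> cayley_V d" and "finite \<gamma>" and "\<gamma> \<noteq> {}" and "tree_connected d \<gamma>"
    and "\<And>v. v \<in> \<gamma> \<Longrightarrow> \<omega> v \<noteq> \<omega>0 v"
    and "\<And>v. v \<in> cayley_V d \<Longrightarrow> v \<notin> \<gamma> \<Longrightarrow> \<omega> v = \<omega>0 v"
  shows "(\<Sum>(v, w)\<in>E_gamma d \<gamma>.
            \<bar>real_of_int (\<omega> v - \<omega> w)\<bar> powr p - \<bar>real_of_int (\<omega>0 v - \<omega>0 w)\<bar> powr p)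
         \<ge> (real d * (c_p p)\<^sup>2 - 1) * (\<Sum>v\<in>\<gamma>. \<bar>real_of_int (\<omega> v - \<omega>0 v)\<bar> powr p)
           - (c_p p + 1) * (\<Sum>(v, w)\<in>E_gamma d \<gamma>. \<bar>real_of_int (\<omega>0 v - \<omega>0 w)\<bar> powr p)"
proof -
  let ?c = "c_p p" and ?E = "E_gamma d \<gamma>"
  define D where "D v = \<bar>real_of_int (\<omega> v - \<omega>0 v)\<bar> powr p" for v
  define A where "A e = (case e of (v, w) \<Rightarrow> \<bar>real_of_int (\<omega>0 v - \<omega>0 w)\<bar> powr p)" for e
  define T where "T e = (case e of (v, w) \<Rightarrow> \<bar>real_of_int (\<omega> v - \<omega> w)\<bar> powr p)" for e
  have "?c\<^sup>2 * D (inner_end \<gamma> e) - D (outer_end \<gamma> e) - (?c + 1) * A e \<le> T e - A e" for e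
  proof (cases e)
    case (Pair v w)
    show ?thesis
      using edge_energy_perturbation_bound[OF assms(2), of "\<omega> v" "\<omega>0 v" "\<omega> w" "\<omega>0 w"]
        edge_energy_perturbation_bound[OF assms(2), of "\<omega> w" "\<omega>0 w" "\<omega> v" "\<omega>0 v"]
      by (simp add: Pair D_def A_def T_def inner_end_def outer_end_def abs_minus_commute)
  qed
  then have "?c\<^sup>2 * (\<Sum>e\<in>?E. D (inner_end \<gamma> e)) - (\<Sum>e\<in>?E. D (outer_end \<gamma> e)) - (?c + 1) * sum A ?E
      \<le> (\<Sum>e\<in>?E. T e - A e)"
    by (simp add: sum_distrib_left flip: sum_subtractf) (rule sum_mono)
  moreover have "real d * sum D \<gamma> \<le> (\<Sum>e\<in>?E. D (inner_end \<gamma> e))"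
    by (rule sum_inner_end_ge[OF assms(4,3)]) (simp add: D_def)
  then have "?c\<^sup>2 * (real d * sum D \<gamma>) \<le> ?c\<^sup>2 * (\<Sum>e\<in>?E. D (inner_end \<gamma> e))"
    by (rule mult_left_mono) simp
  moreover have "(\<Sum>e\<in>?E. D (outer_end \<gamma> e)) \<le> sum D \<gamma>"
    by (rule sum_outer_end_le[OF assms(4)]) (simp_all add: D_def assms(8))
  ultimately show ?thesis
    by (simp add: D_def A_def T_def case_prod_beta' algebra_simps)
qed

end
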